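(* Let $|q|<1$ and let $(\alpha_n,\beta_n)$ be a Bailey pair with respect to $a$, with $|qa|<1$, no denominator vanishing, and all series converging absolutely. Then $$\sum_{n=1}^{\infty} (q^2;q^2)_{n-1}(-q a)^{n} \beta_n - \sum_{n=1}^{\infty}\frac{(q^2;q^2)_{n-1}(-q a)^{n}}{(q^2 a^2 ;q^2)_n}\alpha_n=f_3(a,q),$$ where $f_3(a,q)$ is given by each of the following (equal) expressions: $$f_3(a,q)=-\sum_{n=1}^{\infty} \frac{(q\sqrt{a},-q\sqrt{a},a;q)_{n}(-q;q)_{n-1}q^{n(n+1)/2}a^{n}}{(\sqrt{a},-\sqrt{a};q)_{n}(q^2 a^2;q^2)_{n}(1-q^n)} =\sum_{n=1}^{\infty} \frac{(-q;q)_{n-1}(-q a)^{n}}{(q a;q)_{n}(1-q^n)} =-\sum_{n=1}^{\infty}\frac{a q^n}{1-a^2q^{2n}}.$$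
   Context: Notation: $(x;q)_n=(1-x)(1-xq)\cdots(1-xq^{n-1})$, $(x;q)_0=1$, $(x_1,\dots,x_m;q)_n=(x_1;q)_n\cdots(x_m;q)_n$. A Bailey pair with respect to $a$ (base $q$) is a pair of sequences $(\alpha_n,\beta_n)_{n\ge0}$ with $\alpha_0=\beta_0=1$ and, for $n>0$, $\beta_n=\sum_{j=0}^{n}\frac{\alpha_j}{(q;q)_{n-j}(aq;q)_{n+j}}$. *)

theory Defs
  imports Complex_Main
begin

definition qpoch :: "complex \<Rightarrow> complex \<Rightarrow> nat \<Rightarrow> complex" where
  "qpoch x q n = (\<Prod>k<n. 1 - x * q ^ k)"

definition bailey_pair :: "complex \<Rightarrow> complex \<Rightarrow> (nat \<Rightarrow> complex) \<Rightarrow> (nat \<Rightarrow> complex) \<Rightarrow> bool" where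
  "bailey_pair a q \<alpha> \<beta> \<longleftrightarrow> \<alpha> 0 = 1 \<and> \<beta> 0 = 1 \<and>
     (\<forall>n>0. \<beta> n = (\<Sum>j\<le>n. \<alpha> j / (qpoch q q (n - j) * qpoch (a * q) q (n + j))))"

end

theory Submission
  imports Defs "HOL-Analysis.Infinite_Products"
begin

text \<open>
  Insert the defining relation of the Bailey pair into the beta-series and interchange the
  summations. The term alpha_0 = 1 produces the series sum (-q;q)_(n-1) (-qa)^n / ((qa;q)_n (1-q^n)),
  while each alpha_j with j >= 1 gets its weight in the alpha-series times a nonterminating sum
  sum_m F(j,m) which equals 1. That summation is proved with a WZ pair (F, G), and the uniform
  geometric decay of its partial sums justifies the interchange. So the left-hand side takes the
  same value for every Bailey pair; for the unit Bailey pair (beta_n = 0 for n > 0) it is minus the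
  alpha-series, which is the first expression.
  For the Lambert series let E(b) be the second expression with a replaced by b and
  H(b) = sum b q^n / (1 - b^2 q^(2n)). The terms of E(b) - E(bq) telescope and H(b) - H(bq) is the
  first term of H(b), so E + H is invariant under b |-> bq; as E(aq^k) + H(aq^k) = O(|q|^k), it is 0.
\<close>

section \<open>q-Pochhammer symbols\<close>

lemma qpoch_0 [simp]: "qpoch b q 0 = 1"
  by (simp add: qpoch_def)

lemma qpoch_Suc: "qpoch b q (Suc n) = qpoch b q n * (1 - b * q ^ n)"
  by (simp add: qpoch_def)

lemma qpoch_add: "qpoch b q (m + n) = qpoch b q m * qpoch (b * q ^ m) q n"
  by (induction n) (simp_all add: qpoch_Suc algebra_simps power_add)

lemma qpoch_Suc_left: "qpoch b q (Suc n) = (1 - b) * qpoch (b * q) q n"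
  using qpoch_add[of b q 1 n] by (simp add: qpoch_Suc)

lemma qpoch_square: "qpoch (b\<^sup>2) (q\<^sup>2) n = qpoch b q n * qpoch (- b) q n"
proof (induction n)
  case (Suc n)
  have "b\<^sup>2 * (q\<^sup>2) ^ n = (b * q ^ n) * (b * q ^ n)"
    by (simp add: power2_eq_square power_mult_distrib)
  then have "1 - b\<^sup>2 * (q\<^sup>2) ^ n = (1 - b * q ^ n) * (1 - (- b) * q ^ n)"
    by (simp add: algebra_simps)
  with Suc show ?case by (simp add: qpoch_Suc)
qed simp

lemma one_plus_minus_nonzero:
  fixes z :: complex
  assumes "norm z < 1"
  shows "1 - z \<noteq> 0" "1 + z \<noteq> 0"
  using assms by (auto simp: add_eq_0_iff)

lemma qpoch_nonzero:
  assumes "norm b < 1" "norm q \<le> 1"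
  shows "qpoch b q n \<noteq> 0"
proof -
  have "norm (b * q ^ k) < 1" for k
    using assms by (smt (verit) norm_mult norm_power mult_left_le power_le_one norm_ge_zero)
  then have "1 - b * q ^ k \<noteq> 0" for k
    by (rule one_plus_minus_nonzero)
  then show ?thesis by (simp add: qpoch_def)
qed

lemma geometric_partial_sum_le:
  fixes r :: real
  assumes "0 \<le> r" "r < 1"
  shows "(\<Sum>i<n. r ^ i) \<le> 1 / (1 - r)"
proof -
  have "(\<Sum>i<n. r ^ i) \<le> (\<Sum>i. r ^ i)"
    using assms by (intro sum_le_suminf summable_geometric) auto
  then show ?thesis using assms by (simp add: suminf_geometric)
qed

lemma norm_qpoch_le:
  assumes "norm q < 1"
  shows "norm (qpoch b q n) \<le> exp (norm b / (1 - norm q))"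
proof -
  have "norm (qpoch b q n) \<le> (\<Prod>k<n. exp (norm b * norm q ^ k))"
    unfolding qpoch_def prod_norm[symmetric]
  proof (intro prod_mono conjI norm_ge_zero)
    fix k
    have "norm (1 - b * q ^ k) \<le> 1 + norm b * norm q ^ k"
      by (metis norm_mult norm_one norm_power norm_triangle_ineq4)
    also have "\<dots> \<le> exp (norm b * norm q ^ k)"
      by (simp add: add.commute exp_ge_add_one_self)
    finally show "norm (1 - b * q ^ k) \<le> exp (norm b * norm q ^ k)" .
  qed
  also have "\<dots> = exp (norm b * (\<Sum>k<n. norm q ^ k))"
    by (simp add: exp_sum sum_distrib_left)
  also have "\<dots> \<le> exp (norm b * (1 / (1 - norm q)))"
    using assms by (simp only: exp_le_cancel_iff) (intro mult_left_mono geometric_partial_sum_le, auto)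
  finally show ?thesis by simp
qed

lemma norm_qpoch_ge_half:
  assumes q: "norm q < 1" and small: "norm b / (1 - norm q) \<le> 1/2"
  shows "norm (qpoch b q n) \<ge> 1/2"
proof -
  have nb: "norm b \<le> 1/2"
    using q small by (simp add: divide_le_eq) (smt (verit) norm_ge_zero mult_left_le)
  have t01: "norm b * norm q ^ k \<in> {0..1}" for k
    using q nb by (simp add: mult_le_one power_le_one)
  have "(\<Sum>k<n. norm b * norm q ^ k) \<le> norm b * (1 / (1 - norm q))"
    unfolding sum_distrib_left[symmetric] using q
    by (intro mult_left_mono geometric_partial_sum_le) auto
  then have "1/2 \<le> 1 - (\<Sum>k<n. norm b * norm q ^ k)"
    using small by (simp only: times_divide_eq_right mult_1_right)
  also have "\<dots> \<le> (\<Prod>k<n. 1 - norm b * norm q ^ k)"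
    using t01 by (rule Weierstrass_prod_ineq)
  also have "\<dots> \<le> (\<Prod>k<n. norm (1 - b * q ^ k))"
  proof (intro prod_mono conjI)
    fix k
    show "0 \<le> 1 - norm b * norm q ^ k" using t01[of k] by simp
    show "1 - norm b * norm q ^ k \<le> norm (1 - b * q ^ k)"
      by (metis norm_mult norm_one norm_power norm_triangle_ineq2)
  qed
  also have "\<dots> = norm (qpoch b q n)"
    by (simp add: qpoch_def prod_norm)
  finally show ?thesis .
qed

lemma qpoch_bounded_below:
  assumes q: "norm q < 1" and nz: "\<And>n. qpoch b q n \<noteq> 0"
  shows "\<exists>c>0. \<forall>n. c \<le> norm (qpoch b q n)"
proof -
  have "(\<lambda>K. norm b * norm q ^ K) \<longlonglongrightarrow> norm b * 0"
    using q by (intro tendsto_mult_left LIMSEQ_power_zero) auto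
  moreover have "0 < (1 - norm q) / 2" using q by simp
  ultimately obtain K where K: "norm b * norm q ^ K < (1 - norm q) / 2"
    by (metis (no_types, lifting) mult_zero_right order_tendstoD(2) eventually_sequentially order_refl)
  have tail: "1/2 \<le> norm (qpoch (b * q ^ K) q r)" for r
    using q K by (intro norm_qpoch_ge_half) (auto simp: norm_mult norm_power divide_simps)
  define m where "m = Min ((\<lambda>n. norm (qpoch b q n)) ` {..K})"
  have m_pos: "0 < m"
    unfolding m_def using nz by (subst Min_gr_iff) auto
  have m_le: "m \<le> norm (qpoch b q n)" if "n \<le> K" for n
    unfolding m_def using that by (intro Min_le) auto
  have "m / 2 \<le> norm (qpoch b q n)" for n
  proof (cases "n \<le> K")
    case True
    then show ?thesis using m_le[of n] m_pos by simp
  next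
    case False
    then have "qpoch b q n = qpoch b q K * qpoch (b * q ^ K) q (n - K)"
      using qpoch_add[of b q K "n - K"] by simp
    then have "norm (qpoch b q n) = norm (qpoch b q K) * norm (qpoch (b * q ^ K) q (n - K))"
      by (simp add: norm_mult)
    moreover have "m * (1/2) \<le> norm (qpoch b q K) * norm (qpoch (b * q ^ K) q (n - K))"
      using m_le[of K] m_pos tail by (intro mult_mono) auto
    ultimately show ?thesis by simp
  qed
  then show ?thesis using m_pos by (intro exI[of _ "m / 2"]) auto
qed

lemma qpoch_shifted_bounded_below:
  assumes q: "norm q < 1" and nz: "\<And>n. qpoch b q n \<noteq> 0"
  shows "\<exists>c>0. \<forall>k n. c \<le> norm (qpoch (b * q ^ k) q n)"
proof -
  obtain c where c: "c > 0" "\<And>n. c \<le> norm (qpoch b q n)"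
    using qpoch_bounded_below[OF q nz] by blast
  define E where "E = exp (norm b / (1 - norm q))"
  have E_pos: "E > 0" unfolding E_def by simp
  have "c / E \<le> norm (qpoch (b * q ^ k) q n)" for k n
  proof -
    have "c \<le> norm (qpoch b q k) * norm (qpoch (b * q ^ k) q n)"
      using c(2)[of "k + n"] by (simp add: qpoch_add norm_mult)
    also have "\<dots> \<le> E * norm (qpoch (b * q ^ k) q n)"
      unfolding E_def using q by (intro mult_right_mono norm_qpoch_le) auto
    finally show ?thesis using E_pos by (simp add: divide_le_eq mult.commute)
  qed
  then show ?thesis using c(1) E_pos by (intro exI[of _ "c / E"]) auto
qed

section \<open>A WZ pair for the kernel of the Bailey transform\<close>

text \<open>
  The series sum_m bailey_kernel a q j m equals 1 for every j, and G = bailey_kernel_cert is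
  its WZ certificate: F(j+1,m) - F(j,m) = G(j,m+1) - G(j,m) with G(j,0) = 0.
\<close>

definition bailey_kernel :: "complex \<Rightarrow> complex \<Rightarrow> nat \<Rightarrow> nat \<Rightarrow> complex" where
  "bailey_kernel a q j m = qpoch (q ^ (2 * j)) (q\<^sup>2) m * (- q * a) ^ m * qpoch (q\<^sup>2 * a\<^sup>2) (q\<^sup>2) j
      / (qpoch q q m * qpoch (a * q) q (2 * j + m))"

definition bailey_kernel_cert :: "complex \<Rightarrow> complex \<Rightarrow> nat \<Rightarrow> nat \<Rightarrow> complex" where
  "bailey_kernel_cert a q j m = (case m of 0 \<Rightarrow> 0 | Suc k \<Rightarrow>
      - (q ^ (2 * j)) * ((1 - q * a) + (1 - a * q * q ^ (2 * j)) * q ^ Suc k)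
        * qpoch (q ^ (2 * j) * q\<^sup>2) (q\<^sup>2) k * (- q * a) ^ Suc k * qpoch (q\<^sup>2 * a\<^sup>2) (q\<^sup>2) j
        / (qpoch q q k * qpoch (a * q) q (2 * j + k + 2)))"

lemma bailey_kernel_wz_0:
  assumes nza: "\<And>n. qpoch (a * q) q n \<noteq> 0"
  shows "bailey_kernel a q (Suc j) 0 - bailey_kernel a q j 0
       = bailey_kernel_cert a q j (Suc 0) - bailey_kernel_cert a q j 0"
proof -
  define Q where "Q = q ^ (2 * j)"
  define S where "S = qpoch (q\<^sup>2 * a\<^sup>2) (q\<^sup>2) j"
  have S_Suc: "qpoch (q\<^sup>2 * a\<^sup>2) (q\<^sup>2) (Suc j) = S * (1 - a\<^sup>2 * q\<^sup>2 * Q)"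
    by (simp add: qpoch_Suc S_def Q_def power_mult algebra_simps power2_eq_square)
  define P where "P = qpoch (a * q) q (2 * j)"
  define u1 where "u1 = 1 - a * q * Q"
  define u2 where "u2 = 1 - a * q * q * Q"
  have P_Suc: "qpoch (a * q) q (2 * j + 2) = P * u1 * u2"
    by (simp add: numeral_2_eq_2 qpoch_Suc P_def Q_def u1_def u2_def algebra_simps)
  have nz: "P \<noteq> 0" "u1 \<noteq> 0" "u2 \<noteq> 0"
    using nza[of "2 * j + 2"] unfolding P_Suc by auto
  have "bailey_kernel a q (Suc j) 0 - bailey_kernel a q j 0 = S * (1 - a\<^sup>2 * q\<^sup>2 * Q) / (P * u1 * u2) - S / P"
    using P_Suc by (simp add: bailey_kernel_def S_Suc S_def P_def)
  also have "\<dots> = - Q * ((1 - q * a) + u1 * q) * (- q * a) * S / (P * u1 * u2)"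
    using nz by (simp add: divide_simps) (simp add: u1_def u2_def algebra_simps power2_eq_square)
  also have "\<dots> = bailey_kernel_cert a q j (Suc 0) - bailey_kernel_cert a q j 0"
    using P_Suc by (simp add: bailey_kernel_cert_def S_def Q_def u1_def)
  finally show ?thesis .
qed

lemma bailey_kernel_wz_Suc:
  assumes nzq: "\<And>n. qpoch q q n \<noteq> 0" and nza: "\<And>n. qpoch (a * q) q n \<noteq> 0"
  shows "bailey_kernel a q (Suc j) (Suc k) - bailey_kernel a q j (Suc k)
       = bailey_kernel_cert a q j (Suc (Suc k)) - bailey_kernel_cert a q j (Suc k)"
proof -
  define Q where "Q = q ^ (2 * j)"
  define S where "S = qpoch (q\<^sup>2 * a\<^sup>2) (q\<^sup>2) j"
  have S_Suc: "qpoch (q\<^sup>2 * a\<^sup>2) (q\<^sup>2) (Suc j) = S * (1 - a\<^sup>2 * q\<^sup>2 * Q)"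
    by (simp add: qpoch_Suc S_def Q_def power_mult algebra_simps power2_eq_square)
  define V where "V = qpoch (a * q) q (2 * j + k)"
  define Z where "Z = qpoch (Q * q\<^sup>2) (q\<^sup>2) k"
  define Pq where "Pq = qpoch q q k"
  define y where "y = q ^ k"
  define X where "X = (- q * a) ^ Suc k"
  define u0 where "u0 = 1 - q * y"
  define u1 where "u1 = 1 - a * q * Q * y"
  define u2 where "u2 = 1 - a * q * q * Q * y"
  define u3 where "u3 = 1 - a * q * q * q * Q * y"
  have qjk: "q ^ (2 * j + k) = Q * y" by (simp add: Q_def y_def power_add)
  have V1: "qpoch (a * q) q (Suc (2 * j + k)) = V * u1"
    unfolding qpoch_Suc qjk V_def[symmetric] u1_def by (simp add: algebra_simps)
  have V2: "qpoch (a * q) q (Suc (Suc (2 * j + k))) = V * u1 * u2"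
    unfolding qpoch_Suc[of _ _ "Suc _"] V1 power_Suc qjk u2_def by (simp add: algebra_simps)
  have V3: "qpoch (a * q) q (Suc (Suc (Suc (2 * j + k)))) = V * u1 * u2 * u3"
    unfolding qpoch_Suc[of _ _ "Suc (Suc _)"] V2 power_Suc qjk u3_def by (simp add: algebra_simps)
  have Z1: "qpoch (Q * q\<^sup>2) (q\<^sup>2) (Suc k) = Z * (1 - Q * q\<^sup>2 * y\<^sup>2)"
    by (simp add: qpoch_Suc Z_def y_def power_mult[symmetric] mult.commute[of 2 k] algebra_simps)
  have Z0: "qpoch Q (q\<^sup>2) (Suc k) = (1 - Q) * Z"
    by (simp add: qpoch_Suc_left Z_def)
  have P1: "qpoch q q (Suc k) = Pq * u0"
    by (simp add: qpoch_Suc Pq_def u0_def y_def)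
  have nz: "Pq \<noteq> 0" "u0 \<noteq> 0" "V \<noteq> 0" "u1 \<noteq> 0" "u2 \<noteq> 0" "u3 \<noteq> 0"
    using nzq[of "Suc k"] nza[of "Suc (Suc (Suc (2 * j + k)))"] unfolding P1 V3 by auto
  have idx: "2 * Suc j + Suc k = Suc (Suc (Suc (2 * j + k)))"
    and idx1: "2 * j + Suc k = Suc (2 * j + k)"
    and idx2: "2 * j + k + 2 = Suc (Suc (2 * j + k))" "2 * j + Suc k + 2 = Suc (Suc (Suc (2 * j + k)))"
    by simp_all
  have Q2: "q ^ (2 * Suc j) = Q * q\<^sup>2" by (simp add: Q_def power_add[symmetric])
  have "bailey_kernel a q (Suc j) (Suc k) - bailey_kernel a q j (Suc k)
      = Z * (1 - Q * q\<^sup>2 * y\<^sup>2) * X * S * (1 - a\<^sup>2 * q\<^sup>2 * Q) / (Pq * u0 * (V * u1 * u2 * u3))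
        - (1 - Q) * Z * X * S / (Pq * u0 * (V * u1))"
    unfolding bailey_kernel_def Q2 Q_def[symmetric] S_Suc Z1 Z0 P1 X_def[symmetric] S_def[symmetric]
      idx idx1 V1 V3
    by (simp only: mult.assoc)
  also have "\<dots> = - Q * ((1 - q * a) + (1 - a * q * Q) * (q * q * y)) * (Z * (1 - Q * q\<^sup>2 * y\<^sup>2)) * ((- q * a) * X) * S
          / (Pq * u0 * (V * u1 * u2 * u3))
        - (- Q * ((1 - q * a) + (1 - a * q * Q) * (q * y)) * Z * X * S / (Pq * (V * u1 * u2)))"
    using nz by (simp add: divide_simps) (simp add: u0_def u1_def u2_def u3_def algebra_simps power2_eq_square)
  also have "\<dots> = bailey_kernel_cert a q j (Suc (Suc k)) - bailey_kernel_cert a q j (Suc k)"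
    unfolding bailey_kernel_cert_def nat.case Q_def[symmetric] Z_def[symmetric] Z1 P1
      X_def[symmetric] S_def[symmetric] Pq_def[symmetric] idx2 V2 V3
    by (simp add: X_def y_def mult.assoc)
  finally show ?thesis .
qed

lemma bailey_kernel_wz:
  assumes nzq: "\<And>n. qpoch q q n \<noteq> 0" and nza: "\<And>n. qpoch (a * q) q n \<noteq> 0"
  shows "bailey_kernel a q (Suc j) m - bailey_kernel a q j m
       = bailey_kernel_cert a q j (Suc m) - bailey_kernel_cert a q j m"
  using bailey_kernel_wz_0[OF nza] bailey_kernel_wz_Suc[OF nzq nza] by (cases m) auto

lemma bailey_kernel_0:
  "bailey_kernel a q 0 0 = 1" "bailey_kernel a q 0 (Suc k) = 0"
  by (simp_all add: bailey_kernel_def qpoch_Suc_left)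

lemma sum_bailey_kernel_Suc:
  assumes "norm q < 1" "\<And>n. qpoch (a * q) q n \<noteq> 0"
  shows "(\<Sum>m<M. bailey_kernel a q (Suc j) m) = (\<Sum>m<M. bailey_kernel a q j m) + bailey_kernel_cert a q j M"
proof -
  have "(\<Sum>m<M. bailey_kernel a q (Suc j) m - bailey_kernel a q j m) = bailey_kernel_cert a q j M"
    using assms by (simp add: bailey_kernel_wz qpoch_nonzero sum_lessThan_telescope)
      (simp add: bailey_kernel_cert_def)
  then show ?thesis by (metis sum_subtractf diff_eq_eq add.commute)
qed

lemma sum_bailey_kernel:
  assumes "norm q < 1" "\<And>n. qpoch (a * q) q n \<noteq> 0"
  shows "(\<Sum>m<Suc M. bailey_kernel a q j m) = 1 + (\<Sum>i<j. bailey_kernel_cert a q i (Suc M))"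
proof (induction j)
  case 0
  show ?case by (induction M) (simp_all add: bailey_kernel_0)
next
  case (Suc j)
  show ?case
    unfolding sum_bailey_kernel_Suc[OF assms] Suc.IH sum.lessThan_Suc[of _ j] by (simp add: add.assoc)
qed

lemma norm_bailey_kernel_cert_le:
  assumes q: "norm q < 1" and qa: "norm (q * a) < 1" and nza: "\<And>n. qpoch (a * q) q n \<noteq> 0"
  shows "\<exists>K\<ge>0. \<forall>i k. norm (bailey_kernel_cert a q i (Suc k)) \<le> K * (norm q ^ 2) ^ i * norm (q * a) ^ Suc k"
proof -
  obtain c1 where c1: "c1 > 0" "\<And>n. c1 \<le> norm (qpoch q q n)"
    using qpoch_bounded_below[OF q qpoch_nonzero] q by force
  obtain c2 where c2: "c2 > 0" "\<And>n. c2 \<le> norm (qpoch (a * q) q n)"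
    using qpoch_bounded_below[OF q nza] by blast
  have q2: "norm (q\<^sup>2) < 1" using q by (simp add: norm_power power_less_one_iff)
  define E1 where "E1 = exp (1 / (1 - norm (q\<^sup>2)))"
  define E2 where "E2 = exp (norm (q\<^sup>2 * a\<^sup>2) / (1 - norm (q\<^sup>2)))"
  have E1: "norm (qpoch (q ^ (2 * i) * q\<^sup>2) (q\<^sup>2) k) \<le> E1" for i k
  proof -
    have "norm (q ^ (2 * i) * q\<^sup>2) \<le> 1"
      using q by (simp add: norm_mult norm_power power_le_one mult_le_one)
    then have "exp (norm (q ^ (2 * i) * q\<^sup>2) / (1 - norm (q\<^sup>2))) \<le> E1"
      unfolding E1_def using q2 by (simp add: divide_right_mono)
    then show ?thesis using norm_qpoch_le[OF q2] order_trans by blast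
  qed
  have E2: "norm (qpoch (q\<^sup>2 * a\<^sup>2) (q\<^sup>2) i) \<le> E2" for i
    unfolding E2_def by (rule norm_qpoch_le[OF q2])
  have factor: "norm ((1 - q * a) + (1 - a * q * q ^ (2 * i)) * q ^ Suc k) \<le> 4" for i k
  proof -
    have "norm (a * q * q ^ (2 * i)) \<le> 1" "norm (q ^ Suc k) \<le> 1"
      using q qa by (simp_all add: norm_mult norm_power mult_le_one power_le_one mult.commute)
    then have "norm ((1 - a * q * q ^ (2 * i)) * q ^ Suc k) \<le> 2"
      by (smt (verit) mult_left_le norm_ge_zero norm_mult norm_one norm_triangle_ineq4)
    moreover have "norm (1 - q * a) \<le> 2"
      using qa by (smt (verit) norm_one norm_triangle_ineq4)
    ultimately show ?thesis by (smt (verit) norm_triangle_ineq)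
  qed
  have "norm (bailey_kernel_cert a q i (Suc k)) \<le> 4 * E1 * E2 / (c1 * c2) * (norm q ^ 2) ^ i * norm (q * a) ^ Suc k"
    for i k
  proof -
    have "norm (bailey_kernel_cert a q i (Suc k))
        = (norm q ^ 2) ^ i * norm ((1 - q * a) + (1 - a * q * q ^ (2 * i)) * q ^ Suc k)
          * norm (qpoch (q ^ (2 * i) * q\<^sup>2) (q\<^sup>2) k) * norm (q * a) ^ Suc k * norm (qpoch (q\<^sup>2 * a\<^sup>2) (q\<^sup>2) i)
          / (norm (qpoch q q k) * norm (qpoch (a * q) q (2 * i + k + 2)))"
      by (simp add: bailey_kernel_cert_def norm_mult norm_divide norm_power power_mult norm_minus_commute)
    also have "\<dots> \<le> (norm q ^ 2) ^ i * 4 * E1 * norm (q * a) ^ Suc k * E2 / (c1 * c2)"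
      using c1 c2 by (intro frac_le mult_mono factor E1 E2) (auto simp: E1_def E2_def)
    finally show ?thesis by (simp add: field_simps)
  qed
  moreover have "4 * E1 * E2 / (c1 * c2) \<ge> 0" using c1 c2 by (simp add: E1_def E2_def)
  ultimately show ?thesis by blast
qed

lemma sum_bailey_kernel_minus_one_le:
  assumes q: "norm q < 1" and qa: "norm (q * a) < 1" and nza: "\<And>n. qpoch (a * q) q n \<noteq> 0"
  shows "\<exists>C\<ge>0. \<forall>j M. norm ((\<Sum>m<Suc M. bailey_kernel a q j m) - 1) \<le> C * norm (q * a) ^ Suc M"
proof -
  define r where "r = norm q ^ 2"
  obtain K where K: "K \<ge> 0" "\<And>i k. norm (bailey_kernel_cert a q i (Suc k)) \<le> K * r ^ i * norm (q * a) ^ Suc k"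
    using norm_bailey_kernel_cert_le[OF q qa nza] unfolding r_def by blast
  have r: "0 \<le> r" "r < 1" using q by (simp_all add: r_def power_less_one_iff)
  define C where "C = K / (1 - r)"
  have "norm ((\<Sum>m<Suc M. bailey_kernel a q j m) - 1) \<le> C * norm (q * a) ^ Suc M" for j M
  proof -
    have "norm ((\<Sum>m<Suc M. bailey_kernel a q j m) - 1) \<le> (\<Sum>i<j. norm (bailey_kernel_cert a q i (Suc M)))"
      unfolding sum_bailey_kernel[OF q nza] by (simp add: norm_sum)
    also have "\<dots> \<le> (\<Sum>i<j. K * norm (q * a) ^ Suc M * r ^ i)"
      using K(2) by (intro sum_mono) (simp add: mult_ac)
    also have "\<dots> = K * norm (q * a) ^ Suc M * (\<Sum>i<j. r ^ i)"
      by (simp add: sum_distrib_left)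
    also have "\<dots> \<le> K * norm (q * a) ^ Suc M * (1 / (1 - r))"
      using r K(1) by (intro mult_left_mono geometric_partial_sum_le) auto
    finally show ?thesis by (simp add: C_def)
  qed
  moreover have "C \<ge> 0" using r K(1) by (simp add: C_def)
  ultimately show ?thesis by blast
qed

section \<open>The Bailey pair identity\<close>

text \<open>Indices are shifted by one: the n-th terms below are the (n+1)-st terms of the paper.\<close>

definition f3_term :: "complex \<Rightarrow> complex \<Rightarrow> nat \<Rightarrow> complex" where
  "f3_term a q n = qpoch (- q) q n * (- q * a) ^ Suc n / (qpoch (q * a) q (Suc n) * (1 - q ^ Suc n))"

lemma sum_triangle_swap:
  fixes g :: "nat \<Rightarrow> nat \<Rightarrow> 'a::comm_monoid_add"
  shows "(\<Sum>k<N. \<Sum>i\<le>k. g i (k - i)) = (\<Sum>i<N. \<Sum>j<N - i. g i j)"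
proof -
  have "{(i, j). i + j < N} = Sigma {..<N} (\<lambda>i. {..<N - i})" by auto
  then show ?thesis
    using sum.triangle_reindex[of g N] by (simp add: sum.Sigma)
qed

definition bailey_weight :: "complex \<Rightarrow> complex \<Rightarrow> nat \<Rightarrow> complex" where
  "bailey_weight a q n = qpoch (q\<^sup>2) (q\<^sup>2) n * (- q * a) ^ Suc n"

lemma bailey_beta_term_expand:
  assumes q: "norm q < 1" and bp: "bailey_pair a q \<alpha> \<beta>"
    and nzs: "\<And>n. qpoch (q\<^sup>2 * a\<^sup>2) (q\<^sup>2) n \<noteq> 0"
  shows "bailey_weight a q N * \<beta> (Suc N)
       = f3_term a q N + (\<Sum>j\<le>N. bailey_weight a q j / qpoch (q\<^sup>2 * a\<^sup>2) (q\<^sup>2) (Suc j)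
                                  * \<alpha> (Suc j) * bailey_kernel a q (Suc j) (N - j))"
proof -
  have \<alpha>0: "\<alpha> 0 = 1"
    and \<beta>N: "\<beta> (Suc N) = (\<Sum>i\<le>Suc N. \<alpha> i / (qpoch q q (Suc N - i) * qpoch (a * q) q (Suc N + i)))"
    using bp unfolding bailey_pair_def by auto
  have head: "bailey_weight a q N / (qpoch q q (Suc N) * qpoch (a * q) q (Suc N)) = f3_term a q N"
  proof -
    have "qpoch q q N \<noteq> 0" using q by (simp add: qpoch_nonzero)
    then show ?thesis
      by (simp add: bailey_weight_def f3_term_def qpoch_square[of q, simplified] qpoch_Suc[of q q N] mult_ac)
  qed
  have tail: "bailey_weight a q N * (\<alpha> (Suc j) / (qpoch q q (Suc N - Suc j) * qpoch (a * q) q (Suc N + Suc j)))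
      = bailey_weight a q j / qpoch (q\<^sup>2 * a\<^sup>2) (q\<^sup>2) (Suc j) * \<alpha> (Suc j) * bailey_kernel a q (Suc j) (N - j)"
    if "j \<le> N" for j
  proof -
    have N: "N = j + (N - j)" using that by simp
    have split_qpoch: "qpoch (q\<^sup>2) (q\<^sup>2) N = qpoch (q\<^sup>2) (q\<^sup>2) j * qpoch (q ^ (2 * Suc j)) (q\<^sup>2) (N - j)"
      by (subst N, subst qpoch_add) (simp add: power_mult[symmetric] power_add[symmetric])
    have split_power: "(- q * a) ^ Suc N = (- q * a) ^ Suc j * (- q * a) ^ (N - j)"
      by (subst N) (simp add: power_add)
    have idx: "Suc N - Suc j = N - j" "Suc N + Suc j = 2 * Suc j + (N - j)"
      using that by simp_all
    show ?thesis
      unfolding bailey_weight_def split_qpoch split_power idx bailey_kernel_def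
      using nzs[of "Suc j"] by (simp add: field_simps)
  qed
  have "bailey_weight a q N * \<beta> (Suc N)
      = bailey_weight a q N / (qpoch q q (Suc N) * qpoch (a * q) q (Suc N))
        + (\<Sum>j\<le>N. bailey_weight a q N
                     * (\<alpha> (Suc j) / (qpoch q q (Suc N - Suc j) * qpoch (a * q) q (Suc N + Suc j))))"
    unfolding \<beta>N sum.atMost_Suc_shift by (simp add: \<alpha>0 distrib_left sum_distrib_left)
  also have "\<dots> = f3_term a q N + (\<Sum>j\<le>N. bailey_weight a q j / qpoch (q\<^sup>2 * a\<^sup>2) (q\<^sup>2) (Suc j)
                    * \<alpha> (Suc j) * bailey_kernel a q (Suc j) (N - j))"
    unfolding head by (intro arg_cong[where f="(+) _"] sum.cong refl tail) simp
  finally show ?thesis .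
qed

lemma bailey_kernel_remainder_tendsto_zero:
  fixes A :: "nat \<Rightarrow> complex"
  assumes q: "norm q < 1" and qa: "norm (q * a) < 1" and nza: "\<And>n. qpoch (a * q) q n \<noteq> 0"
    and A: "summable (\<lambda>n. norm (A n))"
  shows "(\<lambda>N. \<Sum>j<N. A j * ((\<Sum>m<N - j. bailey_kernel a q (Suc j) m) - 1)) \<longlonglongrightarrow> 0"
proof -
  define R where "R N = (\<Sum>j<N. A j * ((\<Sum>m<N - j. bailey_kernel a q (Suc j) m) - 1))" for N
  obtain C where C: "C \<ge> 0" "\<And>j M. norm ((\<Sum>m<Suc M. bailey_kernel a q j m) - 1) \<le> C * norm (q * a) ^ Suc M"
    using sum_bailey_kernel_minus_one_le[OF q qa nza] by blast
  define t where "t = norm (q * a)"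
  have t: "0 \<le> t" "t < 1" using qa by (simp_all add: t_def)
  define c where "c M = (\<Sum>i\<le>M. norm (A i) * t ^ (M - i))" for M
  have "summable c"
    unfolding c_def using A t by (intro summable_Cauchy_product) (simp_all add: summable_geometric)
  then have "c \<longlonglongrightarrow> 0" by (rule summable_LIMSEQ_zero)
  then have lim: "(\<lambda>n. C * t * c n) \<longlonglongrightarrow> 0"
    using tendsto_mult_left[of c 0 sequentially "C * t"] by simp
  have R_le: "norm (R (Suc M)) \<le> C * t * c M" for M
  proof -
    have "norm (R (Suc M)) \<le> (\<Sum>j<Suc M. norm (A j) * norm ((\<Sum>m<Suc M - j. bailey_kernel a q (Suc j) m) - 1))"
      unfolding R_def by (rule order_trans[OF norm_sum]) (simp add: norm_mult)
    also have "\<dots> \<le> (\<Sum>j<Suc M. norm (A j) * (C * t * t ^ (M - j)))"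
    proof (intro sum_mono mult_left_mono)
      fix j assume "j \<in> {..<Suc M}"
      then have "Suc M - j = Suc (M - j)" by simp
      then show "norm ((\<Sum>m<Suc M - j. bailey_kernel a q (Suc j) m) - 1) \<le> C * t * t ^ (M - j)"
        using C(2)[of "Suc j" "M - j"] by (simp add: t_def mult.assoc)
    qed simp
    also have "\<dots> = C * t * c M"
      by (simp add: c_def sum_distrib_left lessThan_Suc_atMost algebra_simps)
    finally show ?thesis .
  qed
  have "(\<lambda>n. R (Suc n)) \<longlonglongrightarrow> 0"
    by (intro Lim_null_comparison[OF always_eventually lim] allI R_le)
  then show ?thesis unfolding R_def by (rule LIMSEQ_imp_Suc)
qed

lemma bailey_pair_f3_sums:
  fixes \<alpha> \<beta> :: "nat \<Rightarrow> complex"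
  assumes q: "norm q < 1" and qa: "norm (q * a) < 1" and bp: "bailey_pair a q \<alpha> \<beta>"
    and nza: "\<And>n. qpoch (a * q) q n \<noteq> 0"
    and nzs: "\<And>n. qpoch (q\<^sup>2 * a\<^sup>2) (q\<^sup>2) n \<noteq> 0"
    and abs_beta: "summable (\<lambda>n. norm (bailey_weight a q n * \<beta> (Suc n)))"
    and abs_alpha: "summable (\<lambda>n. norm (bailey_weight a q n / qpoch (q\<^sup>2 * a\<^sup>2) (q\<^sup>2) (Suc n) * \<alpha> (Suc n)))"
  shows "f3_term a q sums ((\<Sum>n. bailey_weight a q n * \<beta> (Suc n))
                          - (\<Sum>n. bailey_weight a q n / qpoch (q\<^sup>2 * a\<^sup>2) (q\<^sup>2) (Suc n) * \<alpha> (Suc n)))"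
proof -
  define B where "B n = bailey_weight a q n * \<beta> (Suc n)" for n
  define A where "A n = bailey_weight a q n / qpoch (q\<^sup>2 * a\<^sup>2) (q\<^sup>2) (Suc n) * \<alpha> (Suc n)" for n
  define R where "R N = (\<Sum>j<N. A j * ((\<Sum>m<N - j. bailey_kernel a q (Suc j) m) - 1))" for N
  have partial: "(\<Sum>n<N. f3_term a q n) = (\<Sum>n<N. B n) - (\<Sum>n<N. A n) - R N" for N
  proof -
    have "(\<Sum>n<N. B n) = (\<Sum>n<N. f3_term a q n) + (\<Sum>n<N. \<Sum>j\<le>n. A j * bailey_kernel a q (Suc j) (n - j))"
      unfolding B_def bailey_beta_term_expand[OF q bp nzs] sum.distrib A_def ..
    also have "\<dots> = (\<Sum>n<N. f3_term a q n) + (\<Sum>j<N. \<Sum>m<N - j. A j * bailey_kernel a q (Suc j) m)"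
      using sum_triangle_swap[of "\<lambda>j m. A j * bailey_kernel a q (Suc j) m" N] by simp
    finally show ?thesis
      by (simp add: R_def algebra_simps sum_distrib_left sum_subtractf)
  qed
  have "R \<longlonglongrightarrow> 0"
    unfolding R_def using abs_alpha unfolding A_def by (rule bailey_kernel_remainder_tendsto_zero[OF q qa nza])
  moreover have "(\<lambda>N. \<Sum>n<N. B n) \<longlonglongrightarrow> suminf B" "(\<lambda>N. \<Sum>n<N. A n) \<longlonglongrightarrow> suminf A"
    using abs_beta abs_alpha unfolding A_def B_def
    by (simp_all add: summable_LIMSEQ summable_norm_cancel)
  ultimately have "(\<lambda>N. (\<Sum>n<N. B n) - (\<Sum>n<N. A n) - R N) \<longlonglongrightarrow> suminf B - suminf A - 0"
    by (intro tendsto_diff)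
  then show ?thesis unfolding sums_def partial by (simp add: A_def[abs_def] B_def[abs_def])
qed

section \<open>The Lambert series\<close>

definition f3_antidiff :: "complex \<Rightarrow> complex \<Rightarrow> nat \<Rightarrow> complex" where
  "f3_antidiff a q n = qpoch (- q) q n * (- q * a) ^ Suc n / qpoch (q * a) q (Suc n)"

definition lambert_term :: "complex \<Rightarrow> complex \<Rightarrow> nat \<Rightarrow> complex" where
  "lambert_term a q n = a * q ^ Suc n / (1 - a\<^sup>2 * q ^ (2 * Suc n))"

lemma f3_term_shift_diff:
  assumes q: "norm q < 1" and qb: "norm (q * b) < 1" and nz: "\<And>n. qpoch (q * b) q n \<noteq> 0"
  shows "f3_term b q n - f3_term (b * q) q n = (f3_antidiff b q n - f3_antidiff b q (Suc n)) / (1 + q * b)"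
proof -
  define P where "P = qpoch (- q) q n"
  define X where "X = (- q * b) ^ Suc n"
  define A1 where "A1 = qpoch (q * b) q (Suc n)"
  define A2 where "A2 = qpoch (q * (b * q)) q (Suc n)"
  define z where "z = q ^ n"
  have A3: "qpoch (q * b) q (Suc (Suc n)) = A1 * (1 - q * b * q * z)"
    by (simp add: A1_def z_def qpoch_Suc[of _ _ "Suc n"] mult_ac)
  have A2: "qpoch (q * b) q (Suc (Suc n)) = (1 - q * b) * A2"
    by (simp add: A2_def qpoch_Suc_left[of _ _ "Suc n"] mult_ac)
  have nz': "A1 \<noteq> 0" "A2 \<noteq> 0" "1 - q * b * q * z \<noteq> 0" "1 - q * b \<noteq> 0"
    using nz[of "Suc (Suc n)"] A3 A2 by auto
  have rel: "A1 * (1 - q * b * q * z) = (1 - q * b) * A2" using A3 A2 by simp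
  have "1 - q * z \<noteq> 0"
    using qpoch_nonzero[of q q "Suc n"] q by (simp add: qpoch_Suc z_def)
  moreover have "1 + q * b \<noteq> 0"
    using qb by (rule one_plus_minus_nonzero)
  moreover have "f3_term b q n - f3_term (b * q) q n = P * X / (A1 * (1 - q * z)) - P * (X * (q * z)) / (A2 * (1 - q * z))"
  proof -
    have "(- q * (b * q)) ^ Suc n = X * (q * z)"
      unfolding X_def z_def by (simp add: power_mult_distrib[symmetric] mult_ac)
    then show ?thesis by (simp add: f3_term_def P_def X_def A1_def A2_def z_def)
  qed
  moreover have "f3_antidiff b q n - f3_antidiff b q (Suc n)
      = P * X / A1 - P * (1 + q * z) * (X * (- q * b)) / (A1 * (1 - q * b * q * z))"
    by (simp add: f3_antidiff_def P_def X_def A1_def z_def qpoch_Suc A3[symmetric] mult_ac)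
  ultimately show ?thesis
    using nz' rel by (simp add: divide_simps) algebra
qed

lemma norm_f3_term_le:
  assumes q: "norm q < 1" and nza: "\<And>n. qpoch (a * q) q n \<noteq> 0"
  shows "\<exists>K\<ge>0. \<forall>k n. norm (f3_term (a * q ^ k) q n) \<le> K * norm (a * q ^ k) * norm (q * a) ^ n
                  \<and> norm (f3_antidiff (a * q ^ k) q n) \<le> K * norm (a * q ^ k) * norm (q * a) ^ n"
proof -
  obtain L where L: "L > 0" "\<And>k n. L \<le> norm (qpoch (a * q * q ^ k) q n)"
    using qpoch_shifted_bounded_below[OF q nza] by blast
  define E where "E = exp (norm (- q) / (1 - norm q))"
  have E: "0 < E" "\<And>n. norm (qpoch (- q) q n) \<le> E"
    unfolding E_def using norm_qpoch_le[OF q, of "- q"] by auto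
  define K where "K = E * norm q / (L * (1 - norm q))"
  have bounds: "norm (f3_term (a * q ^ k) q n) \<le> K * norm (a * q ^ k) * norm (q * a) ^ n
      \<and> norm (f3_antidiff (a * q ^ k) q n) \<le> K * norm (a * q ^ k) * norm (q * a) ^ n" for k n
  proof -
    define b where "b = a * q ^ k"
    define M where "M = E * (norm q * norm b * norm (q * a) ^ n)"
    have M: "0 \<le> M" using E(1) by (simp add: M_def)
    have "norm (q * b) = norm (q * a) * norm q ^ k"
      by (simp add: b_def norm_mult norm_power mult.assoc)
    then have "norm ((- q * b) ^ Suc n) = norm q * norm b * (norm (q * a) * norm q ^ k) ^ n"
      by (metis norm_mult norm_power norm_minus_cancel minus_mult_left power_Suc)
    also have "\<dots> \<le> norm q * norm b * norm (q * a) ^ n"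
      using q by (intro mult_left_mono power_mono) (simp_all add: mult_left_le power_le_one)
    finally have num: "norm (qpoch (- q) q n * (- q * b) ^ Suc n) \<le> M"
      unfolding norm_mult M_def using E by (intro mult_mono) auto
    have den: "L \<le> norm (qpoch (q * b) q (Suc n))"
      using L(2)[of k "Suc n"] by (simp add: b_def mult_ac)
    have "norm (q ^ Suc n) \<le> norm q"
      unfolding norm_power using q power_decreasing[of 1 "Suc n" "norm q"] by simp
    then have den1: "1 - norm q \<le> norm (1 - q ^ Suc n)"
      using norm_triangle_ineq2[of 1 "q ^ Suc n"] by simp
    have pos: "0 < L * (1 - norm q)" using q L(1) by simp
    have "norm (f3_term b q n) \<le> M / (L * (1 - norm q))"
      unfolding f3_term_def norm_divide norm_mult[of "qpoch (q * b) q (Suc n)"]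
      by (rule frac_le[OF M num pos mult_mono[OF den den1]]) (use L(1) q in auto)
    moreover have "norm (f3_antidiff b q n) \<le> M / (L * (1 - norm q))"
    proof -
      have "norm (f3_antidiff b q n) \<le> M / L"
        unfolding f3_antidiff_def norm_divide by (rule frac_le[OF M num L(1) den])
      also have "\<dots> \<le> M / (L * (1 - norm q))"
        using q L(1) M by (intro divide_left_mono) (auto simp: mult_left_le)
      finally show ?thesis .
    qed
    moreover have "M / (L * (1 - norm q)) = K * norm b * norm (q * a) ^ n"
      by (simp add: M_def K_def)
    ultimately show ?thesis by (simp add: b_def)
  qed
  moreover have "K \<ge> 0" using q L(1) E(1) by (simp add: K_def)
  ultimately show ?thesis by blast
qed

lemma norm_lambert_term_le:
  assumes q: "norm q < 1" and nzs: "\<And>n. qpoch (q\<^sup>2 * a\<^sup>2) (q\<^sup>2) n \<noteq> 0"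
  shows "\<exists>K\<ge>0. \<forall>k n. norm (lambert_term (a * q ^ k) q n) \<le> K * norm (a * q ^ k) * norm q ^ n"
proof -
  have q2: "norm (q\<^sup>2) < 1" using q by (simp add: norm_power power_less_one_iff)
  obtain L where L: "L > 0" "\<And>k. L \<le> norm (qpoch (q\<^sup>2 * a\<^sup>2 * (q\<^sup>2) ^ k) (q\<^sup>2) 1)"
    using qpoch_shifted_bounded_below[OF q2 nzs] by blast
  have "norm (lambert_term (a * q ^ k) q n) \<le> norm (a * q ^ k) * norm q ^ n / L" for k n
  proof -
    have "(a * q ^ k)\<^sup>2 * q ^ (2 * Suc n) = q\<^sup>2 * a\<^sup>2 * (q\<^sup>2) ^ (k + n)"
      by (simp add: power_mult_distrib power_mult[symmetric] power_add[symmetric] mult_ac)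
    then have den: "L \<le> norm (1 - (a * q ^ k)\<^sup>2 * q ^ (2 * Suc n))"
      using L(2)[of "k + n"] by (simp add: qpoch_def)
    have "norm (q ^ Suc n) \<le> norm q ^ n"
      unfolding norm_power using q power_decreasing[of n "Suc n" "norm q"] by simp
    then have num: "norm (a * q ^ k * q ^ Suc n) \<le> norm (a * q ^ k) * norm q ^ n"
      unfolding norm_mult[of "a * q ^ k"] by (intro mult_left_mono) auto
    show ?thesis
      unfolding lambert_term_def norm_divide by (rule frac_le[OF _ num L(1) den]) simp
  qed
  then show ?thesis using L(1) by (intro exI[of _ "1 / L"]) auto
qed

lemma summable_norm_suminf_le_geometric:
  fixes f :: "nat \<Rightarrow> complex"
  assumes le: "\<And>n. norm (f n) \<le> C * r ^ n" and r: "0 \<le> r" "r < 1"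
  shows "summable f" "norm (suminf f) \<le> C / (1 - r)"
proof -
  have geom: "summable (\<lambda>n. C * r ^ n)" using r by (intro summable_mult summable_geometric) simp
  then have norm_f: "summable (\<lambda>n. norm (f n))"
    using le by (intro summable_comparison_test[OF _ geom]) simp
  then show "summable f" by (rule summable_norm_cancel)
  have "norm (suminf f) \<le> (\<Sum>n. norm (f n))" by (rule summable_norm[OF norm_f])
  also have "\<dots> \<le> (\<Sum>n. C * r ^ n)" by (rule suminf_le[OF le norm_f geom])
  also have "\<dots> = C / (1 - r)" using r by (simp add: suminf_mult suminf_geometric)
  finally show "norm (suminf f) \<le> C / (1 - r)" .
qed

lemma suminf_f3_lambert_shift:
  assumes q: "norm q < 1" and qb: "norm (q * b) < 1" and nz: "\<And>n. qpoch (q * b) q n \<noteq> 0"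
    and sf: "summable (f3_term b q)" "summable (f3_term (b * q) q)"
    and sl: "summable (lambert_term b q)"
    and lim: "f3_antidiff b q \<longlonglongrightarrow> 0"
  shows "suminf (f3_term b q) + suminf (lambert_term b q)
       = suminf (f3_term (b * q) q) + suminf (lambert_term (b * q) q)"
proof -
  have "(\<lambda>n. (f3_antidiff b q n - f3_antidiff b q (Suc n)) / (1 + q * b)) sums ((f3_antidiff b q 0 - 0) / (1 + q * b))"
    by (intro sums_divide telescope_sums' lim)
  then have "(\<lambda>n. f3_term b q n - f3_term (b * q) q n) sums (f3_antidiff b q 0 / (1 + q * b))"
    by (simp add: f3_term_shift_diff[OF q qb nz])
  then have f3_diff: "suminf (f3_term b q) - suminf (f3_term (b * q) q) = f3_antidiff b q 0 / (1 + q * b)"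
    using sums_unique2 sums_diff[OF summable_sums summable_sums, OF sf] by blast
  have "lambert_term b q (Suc n) = lambert_term (b * q) q n" for n
  proof -
    have "q ^ (2 * Suc (Suc n)) = q\<^sup>2 * q ^ (2 * Suc n)" by (simp add: power_add[symmetric])
    then show ?thesis unfolding lambert_term_def by (simp add: power_mult_distrib mult_ac power2_eq_square)
  qed
  then have lambert_head: "suminf (lambert_term b q) = lambert_term b q 0 + suminf (lambert_term (b * q) q)"
    using suminf_split_head[OF sl] by simp
  have nz1: "1 - q * b \<noteq> 0" "1 + q * b \<noteq> 0"
    using qb by (rule one_plus_minus_nonzero)+
  have w0: "f3_antidiff b q 0 = - (q * b) / (1 - q * b)"
    by (simp add: f3_antidiff_def qpoch_Suc mult.commute)
  have l0: "lambert_term b q 0 = q * b / ((1 - q * b) * (1 + q * b))"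
    by (simp add: lambert_term_def algebra_simps power2_eq_square)
  have "f3_antidiff b q 0 / (1 + q * b) + lambert_term b q 0 = 0"
    using nz1 unfolding w0 l0 by (simp add: field_simps)
  then show ?thesis using f3_diff lambert_head by (simp add: algebra_simps)
qed

lemma suminf_f3_lambert_power_shift:
  assumes q: "norm q < 1" and qa: "norm (q * a) < 1"
    and nza: "\<And>n. qpoch (a * q) q n \<noteq> 0" and nzs: "\<And>n. qpoch (q\<^sup>2 * a\<^sup>2) (q\<^sup>2) n \<noteq> 0"
  shows "suminf (f3_term (a * q ^ Suc k) q) + suminf (lambert_term (a * q ^ Suc k) q)
       = suminf (f3_term (a * q ^ k) q) + suminf (lambert_term (a * q ^ k) q)"
proof -
  obtain K1 where K1: "\<And>k n. norm (f3_term (a * q ^ k) q n) \<le> K1 * norm (a * q ^ k) * norm (q * a) ^ n"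
      "\<And>k n. norm (f3_antidiff (a * q ^ k) q n) \<le> K1 * norm (a * q ^ k) * norm (q * a) ^ n"
    using norm_f3_term_le[OF q nza] by blast
  obtain K2 where K2: "\<And>k n. norm (lambert_term (a * q ^ k) q n) \<le> K2 * norm (a * q ^ k) * norm q ^ n"
    using norm_lambert_term_le[OF q nzs] by blast
  obtain L where L: "L > 0" "\<And>k n. L \<le> norm (qpoch (a * q * q ^ k) q n)"
    using qpoch_shifted_bounded_below[OF q nza] by blast
  have f3_summable: "summable (f3_term (a * q ^ k) q)" for k
    using qa by (intro summable_norm_suminf_le_geometric(1)[OF K1(1)]) auto
  have shift: "a * q ^ k * q = a * q ^ Suc k" by (simp add: mult_ac)
  have "norm (q * (a * q ^ k)) = norm (q * a) * norm q ^ k"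
    by (simp add: norm_mult norm_power mult_ac)
  also have "\<dots> \<le> norm (q * a)"
    using q by (simp add: mult_left_le power_le_one)
  finally have qb: "norm (q * (a * q ^ k)) < 1" using qa by simp
  have nz: "qpoch (q * (a * q ^ k)) q n \<noteq> 0" for n
    using L(2)[of k n] L(1) by (auto simp: mult_ac)
  have "summable (lambert_term (a * q ^ k) q)"
    using q by (intro summable_norm_suminf_le_geometric(1)[OF K2]) auto
  moreover have "f3_antidiff (a * q ^ k) q \<longlonglongrightarrow> 0"
  proof (rule Lim_null_comparison[OF always_eventually])
    show "\<forall>n. norm (f3_antidiff (a * q ^ k) q n) \<le> K1 * norm (a * q ^ k) * norm (q * a) ^ n"
      using K1(2) by blast
    show "(\<lambda>n. K1 * norm (a * q ^ k) * norm (q * a) ^ n) \<longlonglongrightarrow> 0"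
      using qa by (intro tendsto_mult_right_zero LIMSEQ_power_zero) auto
  qed
  moreover have "summable (f3_term (a * q ^ k * q) q)"
    unfolding shift by (rule f3_summable)
  ultimately show ?thesis
    using suminf_f3_lambert_shift[OF q qb nz f3_summable] unfolding shift by simp
qed

lemma suminf_f3_term_eq_lambert:
  assumes q: "norm q < 1" and qa: "norm (q * a) < 1"
    and nza: "\<And>n. qpoch (a * q) q n \<noteq> 0" and nzs: "\<And>n. qpoch (q\<^sup>2 * a\<^sup>2) (q\<^sup>2) n \<noteq> 0"
  shows "suminf (f3_term a q) = - suminf (lambert_term a q)"
proof -
  obtain K1 where K1: "\<And>k n. norm (f3_term (a * q ^ k) q n) \<le> K1 * norm (a * q ^ k) * norm (q * a) ^ n"
    using norm_f3_term_le[OF q nza] by blast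
  obtain K2 where K2: "\<And>k n. norm (lambert_term (a * q ^ k) q n) \<le> K2 * norm (a * q ^ k) * norm q ^ n"
    using norm_lambert_term_le[OF q nzs] by blast
  define D where "D k = suminf (f3_term (a * q ^ k) q) + suminf (lambert_term (a * q ^ k) q)" for k
  have "D (Suc k) = D k" for k
    unfolding D_def by (rule suminf_f3_lambert_power_shift[OF q qa nza nzs])
  then have D_eq: "D k = D 0" for k
    by (induction k) simp_all
  define C where "C = K1 * norm a / (1 - norm (q * a)) + K2 * norm a / (1 - norm q)"
  have D_le: "norm (D 0) \<le> C * norm q ^ k" for k
  proof -
    have "norm (D 0) = norm (D k)" using D_eq[of k] by simp
    also have "\<dots> \<le> norm (suminf (f3_term (a * q ^ k) q)) + norm (suminf (lambert_term (a * q ^ k) q))"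
      unfolding D_def by (rule norm_triangle_ineq)
    also have "\<dots> \<le> K1 * norm (a * q ^ k) / (1 - norm (q * a)) + K2 * norm (a * q ^ k) / (1 - norm q)"
      using q qa by (intro add_mono summable_norm_suminf_le_geometric(2)[OF K1]
          summable_norm_suminf_le_geometric(2)[OF K2]) auto
    also have "\<dots> = C * norm q ^ k"
      unfolding C_def norm_mult norm_power distrib_right by (simp add: mult_ac)
    finally show ?thesis .
  qed
  have "(\<lambda>k. C * norm q ^ k) \<longlonglongrightarrow> 0"
    using q by (intro tendsto_mult_right_zero LIMSEQ_power_zero) auto
  then have "(\<lambda>k. D 0) \<longlonglongrightarrow> 0"
    by (rule Lim_null_comparison[rotated]) (use D_le in simp)
  then have "D 0 = 0" by (simp add: LIMSEQ_const_iff)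
  then show ?thesis by (simp add: D_def eq_neg_iff_add_eq_0)
qed

section \<open>The unit Bailey pair\<close>

definition unit_alpha :: "complex \<Rightarrow> complex \<Rightarrow> nat \<Rightarrow> complex" where
  "unit_alpha a q n = (1 - a * q ^ (2 * n)) * qpoch a q n * (- 1) ^ n * q ^ (n * (n - 1) div 2)
      / ((1 - a) * qpoch q q n)"

lemma triangular_Suc: "Suc k * (Suc k + 1) div 2 = k * (k + 1) div 2 + Suc k"
proof -
  have "Suc k * (Suc k + 1) = k * (k + 1) + 2 * Suc k" by (simp add: algebra_simps)
  then show ?thesis by simp
qed

lemma unit_alpha_partial_sum:
  assumes q: "norm q < 1" and a1: "a \<noteq> 1" and nza: "\<And>n. qpoch (a * q) q n \<noteq> 0"
    and n: "n \<ge> 1" and "k \<le> n"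
  shows "(\<Sum>j\<le>k. unit_alpha a q j / (qpoch q q (n - j) * qpoch (a * q) q (n + j)))
     = (- 1) ^ k * q ^ (k * (k + 1) div 2) * qpoch (a * q) q k * (1 - q ^ (n - k))
       / (qpoch q q k * qpoch q q (n - k) * qpoch (a * q) q (n + k) * (1 - q ^ n))"
  using \<open>k \<le> n\<close>
proof (induction k)
  case 0
  have "1 - q ^ n \<noteq> 0"
    using n q qpoch_nonzero[of q q n] by (cases n) (auto simp: qpoch_Suc)
  then show ?case using a1 by (simp add: unit_alpha_def)
next
  case (Suc k)
  then have kn: "k < n" by simp
  define m where "m = n - Suc k"
  have nk: "n - k = Suc m" and nk1: "n - Suc k = m" using kn by (simp_all add: m_def)
  define s where "s = ((- 1) :: complex) ^ k"
  define t where "t = q ^ (k * (k + 1) div 2)"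
  define Y where "Y = qpoch (a * q) q k"
  define P where "P = qpoch q q k"
  define Rm where "Rm = qpoch q q m"
  define S where "S = qpoch (a * q) q (n + k)"
  define u where "u = q ^ k"
  define v where "v = q ^ m"
  have nkv: "n = k + m + 1" using kn by (simp add: m_def)
  have qn: "q ^ n = u * v * q" by (simp add: nkv u_def v_def power_add)
  have qnk: "q ^ (n + k) = q * u * u * v" by (simp add: nkv u_def v_def power_add mult_ac)
  have e1: "qpoch q q (Suc m) = Rm * (1 - q * v)" by (simp add: qpoch_Suc Rm_def v_def)
  have e2: "qpoch (a * q) q (n + Suc k) = S * (1 - a * q * q * u * u * v)"
    using qpoch_Suc[of "a * q" q "n + k"] by (simp add: S_def qnk mult_ac)
  have e3: "qpoch (a * q) q (Suc k) = Y * (1 - a * q * u)" by (simp add: qpoch_Suc Y_def u_def mult_ac)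
  have e4: "qpoch q q (Suc k) = P * (1 - q * u)" by (simp add: qpoch_Suc P_def u_def)
  have e5: "q ^ (Suc k * (Suc k + 1) div 2) = t * (q * u)"
    unfolding triangular_Suc power_add t_def u_def by simp
  have al: "unit_alpha a q (Suc k) = (1 - a * q * q * u * u) * Y * (- s) * t / (P * (1 - q * u))"
  proof -
    have "q ^ (Suc k * (Suc k - 1) div 2) = t" by (simp add: t_def mult.commute)
    moreover have "qpoch a q (Suc k) = (1 - a) * Y" by (simp add: qpoch_Suc_left Y_def)
    moreover have "q ^ (2 * Suc k) = q * q * u * u" unfolding u_def mult_2 power_add by (simp add: mult_ac)
    ultimately show ?thesis
      using a1 unfolding unit_alpha_def e4 by (simp add: s_def mult_ac)
  qed
  have nz: "P \<noteq> 0" "Rm \<noteq> 0" "S \<noteq> 0" "1 - a * q * q * u * u * v \<noteq> 0"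
      "1 - q * v \<noteq> 0" "1 - q * u \<noteq> 0" "1 - u * v * q \<noteq> 0"
    using q nza[of "n + k"] nza[of "n + Suc k"] e2 qpoch_nonzero[of q q] qpoch_nonzero[of q q "Suc m"]
      qpoch_nonzero[of q q "Suc k"] qpoch_nonzero[of q q "Suc (k + m)"]
    by (auto simp: P_def Rm_def S_def qpoch_Suc u_def v_def nkv power_add mult_ac)
  have IH: "(\<Sum>j\<le>k. unit_alpha a q j / (qpoch q q (n - j) * qpoch (a * q) q (n + j)))
     = s * t * Y * (1 - q * v) / (P * (Rm * (1 - q * v)) * S * (1 - u * v * q))"
    using Suc.IH[OF less_imp_le[OF kn]] unfolding nk e1 qn
      s_def[symmetric] t_def[symmetric] Y_def[symmetric] P_def[symmetric] S_def[symmetric]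
    by (simp add: v_def)
  have "(\<Sum>j\<le>Suc k. unit_alpha a q j / (qpoch q q (n - j) * qpoch (a * q) q (n + j)))
     = s * t * Y * (1 - q * v) / (P * (Rm * (1 - q * v)) * S * (1 - u * v * q))
     + (1 - a * q * q * u * u) * Y * (- s) * t / (P * (1 - q * u)) / (Rm * (S * (1 - a * q * q * u * u * v)))"
    unfolding sum.atMost_Suc IH al nk1 e2 Rm_def ..
  also have "\<dots> = (- s) * (t * (q * u)) * (Y * (1 - a * q * u)) * (1 - v)
      / ((P * (1 - q * u)) * Rm * (S * (1 - a * q * q * u * u * v)) * (1 - u * v * q))"
    using nz by (simp add: divide_simps) algebra
  also have "\<dots> = (- 1) ^ Suc k * q ^ (Suc k * (Suc k + 1) div 2) * qpoch (a * q) q (Suc k) * (1 - q ^ (n - Suc k))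
       / (qpoch q q (Suc k) * qpoch q q (n - Suc k) * qpoch (a * q) q (n + Suc k) * (1 - q ^ n))"
    unfolding e5 e3 e4 nk1 e2 qn by (simp add: s_def Rm_def v_def)
  finally show ?case .
qed

lemma bailey_pair_unit:
  assumes "norm q < 1" "a \<noteq> 1" "\<And>n. qpoch (a * q) q n \<noteq> 0"
  shows "bailey_pair a q (unit_alpha a q) (\<lambda>n. if n = 0 then 1 else 0)"
  unfolding bailey_pair_def
proof (intro conjI allI impI)
  show "unit_alpha a q 0 = 1" using assms(2) by (simp add: unit_alpha_def)
  fix n :: nat assume "n > 0"
  then show "(if n = 0 then 1 else 0) = (\<Sum>j\<le>n. unit_alpha a q j / (qpoch q q (n - j) * qpoch (a * q) q (n + j)))"
    using unit_alpha_partial_sum[OF assms, of n n] by simp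
qed simp

lemma qpoch_plus_minus_shift:
  "qpoch (q * b) q m * qpoch (- q * b) q m * (1 - b\<^sup>2) = (1 - b\<^sup>2 * q ^ (2 * m)) * qpoch b q m * qpoch (- b) q m"
proof -
  have "qpoch (b\<^sup>2 * q\<^sup>2) (q\<^sup>2) m * (1 - b\<^sup>2) = (1 - b\<^sup>2 * (q\<^sup>2) ^ m) * qpoch (b\<^sup>2) (q\<^sup>2) m"
    using qpoch_Suc_left[of "b\<^sup>2" "q\<^sup>2" m] qpoch_Suc[of "b\<^sup>2" "q\<^sup>2" m] by (simp add: mult.commute)
  then show ?thesis
    using qpoch_square[of "q * b" q m] qpoch_square[of b q m]
    by (simp add: power_mult_distrib power_mult[symmetric] mult.commute)
qed

lemma unit_alpha_weighted_term:
  assumes q: "norm q < 1" and a1: "a \<noteq> 1" and r: "r\<^sup>2 = a"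
    and nzr: "qpoch r q (Suc n) \<noteq> 0" "qpoch (- r) q (Suc n) \<noteq> 0"
    and nzs: "qpoch (q\<^sup>2 * a\<^sup>2) (q\<^sup>2) (Suc n) \<noteq> 0"
  shows "qpoch (q * r) q (Suc n) * qpoch (- q * r) q (Suc n) * qpoch a q (Suc n)
           * qpoch (- q) q n * q ^ (Suc n * (Suc n + 1) div 2) * a ^ Suc n
         / (qpoch r q (Suc n) * qpoch (- r) q (Suc n) * qpoch (q\<^sup>2 * a\<^sup>2) (q\<^sup>2) (Suc n) * (1 - q ^ Suc n))
       = bailey_weight a q n / qpoch (q\<^sup>2 * a\<^sup>2) (q\<^sup>2) (Suc n) * unit_alpha a q (Suc n)"
proof -
  have shift: "qpoch (q * r) q (Suc n) * qpoch (- q * r) q (Suc n) * (1 - a)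
      = (1 - a * q ^ (2 * Suc n)) * qpoch r q (Suc n) * qpoch (- r) q (Suc n)"
    using qpoch_plus_minus_shift[of q r "Suc n"] unfolding r .
  have triangular: "q ^ (Suc n * (Suc n + 1) div 2) = q ^ Suc n * q ^ (n * (n + 1) div 2)"
    unfolding triangular_Suc power_add by (simp add: mult_ac)
  have triangular': "Suc n * (Suc n - 1) div 2 = n * (n + 1) div 2" by (simp add: mult_ac)
  have power: "(- q * a) ^ Suc n = (- 1) ^ Suc n * q ^ Suc n * a ^ Suc n"
    by (simp only: power_mult_distrib[symmetric] mult_minus1)
  have sign: "((- 1 :: complex) ^ Suc n) * (- 1) ^ Suc n = 1"
    by (simp add: power_mult_distrib[symmetric])
  have q_Suc: "qpoch q q (Suc n) = qpoch q q n * (1 - q ^ Suc n)" by (simp add: qpoch_Suc)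
  have nzq: "qpoch q q n \<noteq> 0" "1 - q ^ Suc n \<noteq> 0"
    using q qpoch_nonzero[of q q "Suc n"] by (simp_all add: qpoch_nonzero qpoch_Suc)
  have field_identity: "A * B * Ap * Mq * (Qm * W) * Am / (C * D * Sm * (1 - Qm))
      = (P * Mq) * (sg * Qm * Am) / Sm * ((1 - a * Q2) * Ap * sg * W / ((1 - a) * (P * (1 - Qm))))"
    if "A * B * (1 - a) = (1 - a * Q2) * C * D" "sg * sg = 1"
      "C \<noteq> 0" "D \<noteq> 0" "Sm \<noteq> 0" "1 - Qm \<noteq> 0" "P \<noteq> 0"
    for A B C D Ap Mq W Qm Am sg Sm P Q2 :: complex
    using that a1 by (simp add: divide_simps) algebra
  show ?thesis
    unfolding triangular bailey_weight_def unit_alpha_def triangular' power qpoch_square[of q q n, simplified] q_Suc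
    by (rule field_identity[OF shift sign nzr nzs nzq(2,1)])
qed

lemma summable_unit_alpha_weighted:
  assumes q: "norm q < 1" and qa: "norm (q * a) < 1" and a1: "a \<noteq> 1"
    and nzs: "\<And>n. qpoch (q\<^sup>2 * a\<^sup>2) (q\<^sup>2) n \<noteq> 0"
  shows "summable (\<lambda>n. norm (bailey_weight a q n / qpoch (q\<^sup>2 * a\<^sup>2) (q\<^sup>2) (Suc n) * unit_alpha a q (Suc n)))"
proof -
  have q2: "norm (q\<^sup>2) < 1" using q by (simp add: norm_power power_less_one_iff)
  obtain c1 where c1: "c1 > 0" "\<And>n. c1 \<le> norm (qpoch q q n)"
    using qpoch_bounded_below[OF q qpoch_nonzero] q by force
  obtain c2 where c2: "c2 > 0" "\<And>n. c2 \<le> norm (qpoch (q\<^sup>2 * a\<^sup>2) (q\<^sup>2) n)"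
    using qpoch_bounded_below[OF q2 nzs] by blast
  define E1 where "E1 = exp (norm (q\<^sup>2) / (1 - norm (q\<^sup>2)))"
  define E2 where "E2 = exp (norm a / (1 - norm q))"
  have E1: "norm (qpoch (q\<^sup>2) (q\<^sup>2) n) \<le> E1" for n unfolding E1_def by (rule norm_qpoch_le[OF q2])
  have E2: "norm (qpoch a q n) \<le> E2" for n unfolding E2_def by (rule norm_qpoch_le[OF q])
  have a1': "norm (1 - a) > 0" using a1 by simp
  define K where "K = E1 * (1 + norm a) * E2 / (c2 * (norm (1 - a) * c1))"
  have bound: "norm (bailey_weight a q n / qpoch (q\<^sup>2 * a\<^sup>2) (q\<^sup>2) (Suc n) * unit_alpha a q (Suc n))
      \<le> K * norm (q * a) ^ Suc n" for n
  proof -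
    define m where "m = Suc n"
    have "norm (a * q ^ (2 * m)) \<le> norm a"
      using q by (simp add: norm_mult norm_power mult_left_le power_le_one)
    then have factor: "norm (1 - a * q ^ (2 * m)) \<le> 1 + norm a"
      using norm_triangle_ineq4[of 1 "a * q ^ (2 * m)"] by simp
    have q_pow: "norm q ^ (m * (m - 1) div 2) \<le> 1" using q by (simp add: power_le_one)
    have "norm (qpoch (q\<^sup>2) (q\<^sup>2) n * (- q * a) ^ m / qpoch (q\<^sup>2 * a\<^sup>2) (q\<^sup>2) m * unit_alpha a q m)
      = norm (qpoch (q\<^sup>2) (q\<^sup>2) n) * norm (q * a) ^ m * norm (1 - a * q ^ (2 * m)) * norm (qpoch a q m)
          * norm q ^ (m * (m - 1) div 2) / (norm (qpoch (q\<^sup>2 * a\<^sup>2) (q\<^sup>2) m) * (norm (1 - a) * norm (qpoch q q m)))"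
      by (simp add: unit_alpha_def norm_mult norm_divide norm_power)
    also have "\<dots> \<le> E1 * norm (q * a) ^ m * (1 + norm a) * E2 * 1 / (c2 * (norm (1 - a) * c1))"
    proof (rule frac_le)
      show "norm (qpoch (q\<^sup>2) (q\<^sup>2) n) * norm (q * a) ^ m * norm (1 - a * q ^ (2 * m)) * norm (qpoch a q m)
          * norm q ^ (m * (m - 1) div 2) \<le> E1 * norm (q * a) ^ m * (1 + norm a) * E2 * 1"
        by (intro mult_mono E1 E2 factor q_pow order_refl) (auto simp: E1_def E2_def)
      show "c2 * (norm (1 - a) * c1) \<le> norm (qpoch (q\<^sup>2 * a\<^sup>2) (q\<^sup>2) m) * (norm (1 - a) * norm (qpoch q q m))"
        using c1 c2 a1' by (intro mult_mono) auto
    qed (use c1 c2 a1' in \<open>auto simp: E1_def E2_def\<close>)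
    also have "\<dots> = K * norm (q * a) ^ m" by (simp add: K_def)
    finally show ?thesis unfolding m_def bailey_weight_def .
  qed
  have "summable (\<lambda>n. K * norm (q * a) ^ Suc n)"
    using qa by (intro summable_mult summable_Suc_iff[THEN iffD2] summable_geometric) simp
  then show ?thesis
    by (rule summable_comparison_test[rotated]) (use bound in simp)
qed

theorem corollary3p5:
  fixes a q :: complex and \<alpha> \<beta> :: "nat \<Rightarrow> complex"
  assumes hq: "norm q < 1"
    and hqa: "norm (q * a) < 1"
    and bp: "bailey_pair a q \<alpha> \<beta>"
    and nz_bailey: "\<forall>n. qpoch (a * q) q n \<noteq> 0"
    and nz_sqrt: "\<forall>n. qpoch (csqrt a) q n \<noteq> 0 \<and> qpoch (- csqrt a) q n \<noteq> 0"
    and nz_sq: "\<forall>n. qpoch (q\<^sup>2 * a\<^sup>2) (q\<^sup>2) n \<noteq> 0"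
    and nz_last: "\<forall>n\<ge>1. 1 - a\<^sup>2 * q ^ (2 * n) \<noteq> 0"
    and abs_beta: "summable (\<lambda>n. norm (qpoch (q\<^sup>2) (q\<^sup>2) n * (- q * a) ^ Suc n * \<beta> (Suc n)))"
    and abs_alpha: "summable (\<lambda>n. norm (qpoch (q\<^sup>2) (q\<^sup>2) n * (- q * a) ^ Suc n
                      / qpoch (q\<^sup>2 * a\<^sup>2) (q\<^sup>2) (Suc n) * \<alpha> (Suc n)))"
  shows
    "let L = (\<Sum>n. qpoch (q\<^sup>2) (q\<^sup>2) n * (- q * a) ^ Suc n * \<beta> (Suc n))
           - (\<Sum>n. qpoch (q\<^sup>2) (q\<^sup>2) n * (- q * a) ^ Suc n
                      / qpoch (q\<^sup>2 * a\<^sup>2) (q\<^sup>2) (Suc n) * \<alpha> (Suc n))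
     in L = - (\<Sum>n. qpoch (q * csqrt a) q (Suc n) * qpoch (- q * csqrt a) q (Suc n) * qpoch a q (Suc n)
                     * qpoch (- q) q n * q ^ ((Suc n) * (Suc n + 1) div 2) * a ^ Suc n
                   / (qpoch (csqrt a) q (Suc n) * qpoch (- csqrt a) q (Suc n)
                      * qpoch (q\<^sup>2 * a\<^sup>2) (q\<^sup>2) (Suc n) * (1 - q ^ Suc n)))
      \<and> L = (\<Sum>n. qpoch (- q) q n * (- q * a) ^ Suc n / (qpoch (q * a) q (Suc n) * (1 - q ^ Suc n)))
      \<and> L = - (\<Sum>n. a * q ^ Suc n / (1 - a\<^sup>2 * q ^ (2 * Suc n)))"
proof -
  have nza: "\<And>n. qpoch (a * q) q n \<noteq> 0" and nzs: "\<And>n. qpoch (q\<^sup>2 * a\<^sup>2) (q\<^sup>2) n \<noteq> 0"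
    using nz_bailey nz_sq by blast+
  have a1: "a \<noteq> 1"
    using nz_sqrt[rule_format, of 1] by (auto simp: qpoch_def)
  have f3_L: "f3_term a q sums ((\<Sum>n. bailey_weight a q n * \<beta> (Suc n))
      - (\<Sum>n. bailey_weight a q n / qpoch (q\<^sup>2 * a\<^sup>2) (q\<^sup>2) (Suc n) * \<alpha> (Suc n)))"
    using abs_beta abs_alpha unfolding bailey_weight_def[symmetric]
    by (rule bailey_pair_f3_sums[OF hq hqa bp nza nzs])
  have "f3_term a q sums (0 - (\<Sum>n. bailey_weight a q n / qpoch (q\<^sup>2 * a\<^sup>2) (q\<^sup>2) (Suc n) * unit_alpha a q (Suc n)))"
    using bailey_pair_f3_sums[OF hq hqa bailey_pair_unit[OF hq a1 nza] nza nzs _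
        summable_unit_alpha_weighted[OF hq hqa a1 nzs]] by simp
  moreover have "(\<lambda>n. bailey_weight a q n / qpoch (q\<^sup>2 * a\<^sup>2) (q\<^sup>2) (Suc n) * unit_alpha a q (Suc n))
     = (\<lambda>n. qpoch (q * csqrt a) q (Suc n) * qpoch (- q * csqrt a) q (Suc n) * qpoch a q (Suc n)
             * qpoch (- q) q n * q ^ ((Suc n) * (Suc n + 1) div 2) * a ^ Suc n
           / (qpoch (csqrt a) q (Suc n) * qpoch (- csqrt a) q (Suc n)
              * qpoch (q\<^sup>2 * a\<^sup>2) (q\<^sup>2) (Suc n) * (1 - q ^ Suc n)))"
    using unit_alpha_weighted_term[OF hq a1 _ _ _ nzs] nz_sqrt by simp
  moreover have "f3_term a q = (\<lambda>n. qpoch (- q) q n * (- q * a) ^ Suc n / (qpoch (q * a) q (Suc n) * (1 - q ^ Suc n)))"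
    by (simp add: fun_eq_iff f3_term_def)
  moreover have "lambert_term a q = (\<lambda>n. a * q ^ Suc n / (1 - a\<^sup>2 * q ^ (2 * Suc n)))"
    by (simp add: fun_eq_iff lambert_term_def)
  ultimately show ?thesis
    using sums_unique2[OF f3_L] sums_unique[OF f3_L] suminf_f3_term_eq_lambert[OF hq hqa nza nzs]
    unfolding Let_def bailey_weight_def by auto
qed

end
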